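(* Let $G$ be a $k$-uniform $s$-cycle with $1\le s\le k-1$ and $k=q(k-s)\ge 3$ for a positive integer $q$. Then $G$ is regular and $\lambda(\mathcal{Q})=2q$. Assume further that $k$ is even. If either $q$ is odd, or $q=2^{t_0}(2l_0+1)$ for a positive integer $t_0$ and a nonnegative integer $l_0$ and the number $m$ of edges of $G$ is a multiple of $2^{t_0}$, then also $\lambda(\mathcal{L})=2q$.
   Context: A $k$-uniform $s$-cycle with $m$ edges has vertex set $\mathbb{Z}_n$, $n=m(k-s)$ (vertex $n+i$ identified with $i$), and edges $e_j=\{j(k-s)+1,\ldots,j(k-s)+k\}$, $j=0,\ldots,m-1$; it is assumed that $n\ge 2k-s$. A hypergraph is regular if all degrees $d_i$ (numbers of edges containing vertex $i$) are equal. For a real tensor $\mathcal{T}$ of order $k$ and dimension $n$, $\lambda\in\mathbb{R}$ is an H-eigenvalue if there is nonzero $\mathbf{x}\in\mathbb{R}^n$ with $(\mathcal{T}\mathbf{x}^{k-1})_i=\lambda x_i^{k-1}$ for all $i$, where $(\mathcal{T}\mathbf{x}^{k-1})_i=\sum_{i_2,\ldots,i_k}t_{ii_2\ldots i_k}x_{i_2}\cdots x_{i_k}$; $\lambda(\mathcal{T})$ is the largest H-eigenvalue. The adjacency tensor $\mathcal{A}$ has entries $1/(k-1)!$ at $(i_1,\ldots,i_k)$ with $\{i_1,\ldots,i_k\}$ an edge and $0$ otherwise; $\mathcal{D}$ is diagonal with entries $d_i$; $\mathcal{L}=\mathcal{D}-\mathcal{A}$, $\mathcal{Q}=\mathcal{D}+\mathcal{A}$.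 *)

theory Defs
  imports Complex_Main
begin

text \<open>k-uniform s-cycle with m edges. Vertex set Z_n, n = m(k-s), represented
  by {0..<n}; vertex n+i is identified with i (so vertex n is 0).\<close>

definition cyc_n :: "nat \<Rightarrow> nat \<Rightarrow> nat \<Rightarrow> nat" where
  "cyc_n k s m = m * (k - s)"

definition cyc_edge :: "nat \<Rightarrow> nat \<Rightarrow> nat \<Rightarrow> nat \<Rightarrow> nat set" where
  "cyc_edge k s m j = (\<lambda>i. (j * (k - s) + i) mod cyc_n k s m) ` {1..k}"

definition cyc_edges :: "nat \<Rightarrow> nat \<Rightarrow> nat \<Rightarrow> nat set set" where
  "cyc_edges k s m = cyc_edge k s m ` {..<m}"

definition cyc_deg :: "nat \<Rightarrow> nat \<Rightarrow> nat \<Rightarrow> nat \<Rightarrow> nat" where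
  "cyc_deg k s m i = card {e \<in> cyc_edges k s m. i \<in> e}"

definition cyc_regular :: "nat \<Rightarrow> nat \<Rightarrow> nat \<Rightarrow> bool" where
  "cyc_regular k s m =
     (\<forall>i < cyc_n k s m. \<forall>j < cyc_n k s m. cyc_deg k s m i = cyc_deg k s m j)"

text \<open>Tensors of order k and dimension n: functions from index lists (of length k,
  entries in {0..<n}) to reals.\<close>
type_synonym tensor = "nat list \<Rightarrow> real"

definition tensor_apply :: "nat \<Rightarrow> nat \<Rightarrow> tensor \<Rightarrow> (nat \<Rightarrow> real) \<Rightarrow> nat \<Rightarrow> real" where
  "tensor_apply k n T x i =
     (\<Sum>is \<in> {is. length is = k - 1 \<and> set is \<subseteq> {..<n}}. T (i # is) * prod_list (map x is))"

definition is_H_eigenvalue :: "nat \<Rightarrow> nat \<Rightarrow> tensor \<Rightarrow> real \<Rightarrow> bool" where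
  "is_H_eigenvalue k n T lam =
     (\<exists>x :: nat \<Rightarrow> real. (\<exists>i < n. x i \<noteq> 0) \<and>
        (\<forall>i < n. tensor_apply k n T x i = lam * x i ^ (k - 1)))"

definition is_largest_H_eigenvalue :: "nat \<Rightarrow> nat \<Rightarrow> tensor \<Rightarrow> real \<Rightarrow> bool" where
  "is_largest_H_eigenvalue k n T lam =
     (is_H_eigenvalue k n T lam \<and> (\<forall>\<mu>. is_H_eigenvalue k n T \<mu> \<longrightarrow> \<mu> \<le> lam))"

definition cyc_adj :: "nat \<Rightarrow> nat \<Rightarrow> nat \<Rightarrow> tensor" where
  "cyc_adj k s m is = (if set is \<in> cyc_edges k s m then 1 / fact (k - 1) else 0)"

definition cyc_diag :: "nat \<Rightarrow> nat \<Rightarrow> nat \<Rightarrow> tensor" where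
  "cyc_diag k s m is = (if \<exists>i. is = replicate k i then real (cyc_deg k s m (hd is)) else 0)"

definition cyc_lap :: "nat \<Rightarrow> nat \<Rightarrow> nat \<Rightarrow> tensor" where
  "cyc_lap k s m is = cyc_diag k s m is - cyc_adj k s m is"

definition cyc_slap :: "nat \<Rightarrow> nat \<Rightarrow> nat \<Rightarrow> tensor" where
  "cyc_slap k s m is = cyc_diag k s m is + cyc_adj k s m is"

end

theory Submission
  imports Defs "HOL-Combinatorics.Multiset_Permutations"
begin

text \<open>Write \<open>d = k - s\<close>. The vertices split into \<open>m\<close> blocks of \<open>d\<close> consecutive
  vertices and every edge is a run of \<open>q\<close> consecutive blocks, so each vertex lies in
  exactly \<open>q\<close> edges. Hence \<open>(Q x)_i = q x_i^(k-1) + \<Sum>_{e \<ni> i} \<Prod>_{j \<in> e - {i}} x_j\<close>,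
  and \<open>L\<close> has the same form with a minus sign; evaluating the eigen-equation at a
  coordinate of maximal modulus bounds every H-eigenvalue by \<open>2q\<close>. The all-ones vector
  attains \<open>2q\<close> for \<open>Q\<close>. For \<open>L\<close> with \<open>k\<close> even, write \<open>q = p r\<close> with \<open>r\<close> odd and
  \<open>p\<close> dividing \<open>m\<close>, and take the \<open>\<plusminus>1\<close>-vector that is \<open>-1\<close> on every \<open>p d\<close>-th vertex:
  each edge contains \<open>r\<close> such vertices, so all edge products are \<open>-1\<close> and the vector is
  an eigenvector of \<open>L\<close> for \<open>2q\<close>.\<close>

lemma tensor_apply_add:
  "tensor_apply k n (\<lambda>is. A is + B is) x i = tensor_apply k n A x i + tensor_apply k n B x i"
  by (simp add: tensor_apply_def distrib_right sum.distrib)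

lemma tensor_apply_diff:
  "tensor_apply k n (\<lambda>is. A is - B is) x i = tensor_apply k n A x i - tensor_apply k n B x i"
  by (simp add: tensor_apply_def left_diff_distrib sum_subtractf)

lemma finite_index_lists: "finite {is. length is = l \<and> set is \<subseteq> {..<n::nat}}"
  using finite_lists_length_eq[of "{..<n}" l] by (simp add: conj_commute)

lemma tensor_apply_diagonal:
  assumes "k \<ge> 1" and "i < n"
  shows "tensor_apply k n (\<lambda>is. if \<exists>j. is = replicate k j then D (hd is) else 0) x i
       = D i * x i ^ (k - 1)"
proof -
  have replicate_k: "replicate k j = j # replicate (k - 1) j" for j :: nat
    using assms(1) by (cases k) auto
  have "tensor_apply k n (\<lambda>is. if \<exists>j. is = replicate k j then D (hd is) else 0) x i
      = (\<Sum>is | length is = k - 1 \<and> set is \<subseteq> {..<n}.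
           if is = replicate (k - 1) i then D i * x i ^ (k - 1) else 0)"
    unfolding tensor_apply_def
    by (rule sum.cong) (auto simp: replicate_k prod_list_replicate)
  also have "\<dots> = D i * x i ^ (k - 1)"
    using assms(2) finite_index_lists by (subst sum.delta) auto
  finally show ?thesis .
qed

text \<open>Each edge containing \<open>i\<close> is hit by the \<open>(k - 1)!\<close> orderings of its
  other vertices, which cancels the normalisation of the adjacency tensor.\<close>

lemma tensor_apply_adjacency:
  fixes E :: "nat set set" and x :: "nat \<Rightarrow> real"
  assumes edges: "\<And>e. e \<in> E \<Longrightarrow> card e = k \<and> e \<subseteq> {..<n}"
    and "finite E" and "k \<ge> 1" and "i < n"
  shows "tensor_apply k n (\<lambda>is. if set is \<in> E then 1 / fact (k - 1) else 0) x i
       = (\<Sum>e | e \<in> E \<and> i \<in> e. prod x (e - {i}))"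
proof -
  let ?S = "{is. length is = k - 1 \<and> set is \<subseteq> {..<n}}"
  let ?Ei = "{e. e \<in> E \<and> i \<in> e}"
  have finite_edge: "finite e" if "e \<in> E" for e
    using edges[OF that] finite_subset by blast
  have lists_eq: "{is \<in> ?S. set (i # is) \<in> E} = (\<Union>e\<in>?Ei. permutations_of_set (e - {i}))"
  proof (intro equalityI subsetI)
    fix xs assume "xs \<in> {is \<in> ?S. set (i # is) \<in> E}"
    then have len: "length xs = k - 1" and e: "set (i # xs) \<in> E" by auto
    have "card (set (i # xs)) = length (i # xs)"
      using edges[OF e] len assms(3) by simp
    then have "distinct (i # xs)" by (rule card_distinct)
    then show "xs \<in> (\<Union>e\<in>?Ei. permutations_of_set (e - {i}))"
      using e by (auto simp: permutations_of_set_def intro!: bexI[of _ "set (i # xs)"])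
  next
    fix xs assume "xs \<in> (\<Union>e\<in>?Ei. permutations_of_set (e - {i}))"
    then obtain e where e: "e \<in> E" "i \<in> e" and xs: "set xs = e - {i}" "distinct xs"
      by (auto simp: permutations_of_set_def)
    have "length xs = k - 1"
      using edges[OF e(1)] e(2) xs finite_edge[OF e(1)] by (metis card_Diff_singleton distinct_card)
    moreover have "set (i # xs) = e" using xs e by auto
    ultimately show "xs \<in> {is \<in> ?S. set (i # is) \<in> E}" using edges[OF e(1)] e xs by auto
  qed
  have perm_sum: "(\<Sum>xs\<in>permutations_of_set (e - {i}). prod_list (map x xs) / fact (k - 1))
      = prod x (e - {i})" if e: "e \<in> ?Ei" for e
  proof -
    have "prod_list (map x xs) = prod x (e - {i})" if "xs \<in> permutations_of_set (e - {i})" for xs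
      using that prod.distinct_set_conv_list[of xs x] by (simp add: permutations_of_set_def)
    moreover have "card (permutations_of_set (e - {i})) = fact (k - 1)"
      using e edges[of e] finite_edge[of e] by (simp add: card_permutations_of_set)
    ultimately show ?thesis by simp
  qed
  have "tensor_apply k n (\<lambda>is. if set is \<in> E then 1 / fact (k - 1) else 0) x i
      = (\<Sum>xs\<in>?S. if set (i # xs) \<in> E then prod_list (map x xs) / fact (k - 1) else 0)"
    unfolding tensor_apply_def by (rule sum.cong) auto
  also have "\<dots> = (\<Sum>xs\<in>{is \<in> ?S. set (i # is) \<in> E}. prod_list (map x xs) / fact (k - 1))"
    by (rule sum.inter_filter[OF finite_index_lists, symmetric])
  also have "\<dots> = (\<Sum>e\<in>?Ei. \<Sum>xs\<in>permutations_of_set (e - {i}). prod_list (map x xs) / fact (k - 1))"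
    unfolding lists_eq
    by (rule sum.UNION_disjoint) (simp_all add: \<open>finite E\<close>, auto simp: permutations_of_set_def)
  also have "\<dots> = (\<Sum>e\<in>?Ei. prod x (e - {i}))"
    using perm_sum by (rule sum.cong[OF refl])
  finally show ?thesis .
qed

lemma abs_sum_edge_prods_le:
  fixes x :: "nat \<Rightarrow> real" and M :: real
  assumes edges: "\<And>e. e \<in> E \<Longrightarrow> card e = k \<and> e \<subseteq> {..<n}"
    and bound: "\<And>j. j < n \<Longrightarrow> \<bar>x j\<bar> \<le> M"
  shows "\<bar>\<Sum>e | e \<in> E \<and> i \<in> e. prod x (e - {i})\<bar> \<le> card {e. e \<in> E \<and> i \<in> e} * M ^ (k - 1)"
proof -
  have "\<bar>prod x (e - {i})\<bar> \<le> M ^ (k - 1)" if e: "e \<in> E" "i \<in> e" for e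
  proof -
    have "finite e" using edges[OF e(1)] finite_subset by blast
    have "\<bar>prod x (e - {i})\<bar> = (\<Prod>j\<in>e - {i}. \<bar>x j\<bar>)" by (rule abs_prod)
    also have "\<dots> \<le> (\<Prod>j\<in>e - {i}. M)"
      using edges[OF e(1)] bound by (intro prod_mono) (auto simp: subset_iff)
    also have "\<dots> = M ^ (k - 1)" using edges[OF e(1)] e(2) \<open>finite e\<close> by simp
    finally show ?thesis .
  qed
  then have "\<bar>\<Sum>e | e \<in> E \<and> i \<in> e. prod x (e - {i})\<bar> \<le> (\<Sum>e | e \<in> E \<and> i \<in> e. M ^ (k - 1))"
    by (intro order_trans[OF sum_abs] sum_mono) auto
  then show ?thesis by (simp only: sum_constant)
qed

lemma H_eigenvalue_le_twice:
  fixes T :: tensor and c :: real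
  assumes bound: "\<And>x M i. (\<And>j. j < n \<Longrightarrow> \<bar>x j\<bar> \<le> M) \<Longrightarrow> i < n \<Longrightarrow>
               \<bar>tensor_apply k n T x i - c * x i ^ (k - 1)\<bar> \<le> c * M ^ (k - 1)"
    and "is_H_eigenvalue k n T lam"
  shows "lam \<le> 2 * c"
proof -
  obtain x where nonzero: "\<exists>i<n. x i \<noteq> 0"
    and eigen: "\<And>i. i < n \<Longrightarrow> tensor_apply k n T x i = lam * x i ^ (k - 1)"
    using assms(2) by (auto simp: is_H_eigenvalue_def)
  define M where "M = Max ((\<lambda>j. \<bar>x j\<bar>) ` {..<n})"
  have M_ge: "\<And>j. j < n \<Longrightarrow> \<bar>x j\<bar> \<le> M" unfolding M_def by (intro Max_ge) auto
  have "M \<in> (\<lambda>j. \<bar>x j\<bar>) ` {..<n}" unfolding M_def using nonzero by (intro Max_in) auto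
  then obtain i where i: "i < n" "\<bar>x i\<bar> = M" by auto
  have "M > 0" using nonzero M_ge by (meson order_less_le_trans zero_less_abs_iff)
  have "\<bar>lam - c\<bar> * M ^ (k - 1) = \<bar>tensor_apply k n T x i - c * x i ^ (k - 1)\<bar>"
    using eigen[OF i(1)] i(2) by (simp add: left_diff_distrib[symmetric] abs_mult power_abs)
  also have "\<dots> \<le> c * M ^ (k - 1)" using bound[OF M_ge i(1)] .
  finally show ?thesis using \<open>M > 0\<close> by simp
qed

lemma cyc_edge_mem_iff:
  assumes "k < cyc_n k s m" and "v < cyc_n k s m"
  shows "v \<in> cyc_edge k s m j \<longleftrightarrow>
         (int v - 1 - int j * int (k - s)) mod int (cyc_n k s m) < int k"
proof -
  let ?n = "cyc_n k s m" and ?d = "k - s"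
  show ?thesis
  proof
    assume "v \<in> cyc_edge k s m j"
    then obtain t where t: "1 \<le> t" "t \<le> k" and v: "v = (j * ?d + t) mod ?n"
      by (auto simp: cyc_edge_def)
    have "int v = (int j * int ?d + int t) mod int ?n" using v by (simp add: zmod_int)
    then have "(int v - 1 - int j * int ?d) mod int ?n
        = (int j * int ?d + int t - 1 - int j * int ?d) mod int ?n"
      by (metis mod_diff_left_eq)
    also have "\<dots> = int t - 1" using t assms(1) by simp
    finally show "(int v - 1 - int j * int ?d) mod int ?n < int k" using t by simp
  next
    define u where "u = (int v - 1 - int j * int ?d) mod int ?n"
    assume "u < int k"
    moreover have "0 \<le> u" using assms by (simp add: u_def)
    moreover have "int ((j * ?d + (nat u + 1)) mod ?n) = int v"
    proof -
      have "int ((j * ?d + (nat u + 1)) mod ?n) = (int j * int ?d + (u + 1)) mod int ?n"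
        using \<open>0 \<le> u\<close> by (simp add: zmod_int ac_simps)
      also have "\<dots> = (int j * int ?d + ((int v - 1 - int j * int ?d) + 1)) mod int ?n"
        unfolding u_def by (metis mod_add_left_eq mod_add_right_eq)
      also have "\<dots> = int v" using assms(2) by simp
      finally show ?thesis .
    qed
    ultimately show "v \<in> cyc_edge k s m j"
      unfolding cyc_edge_def by (intro image_eqI[of _ _ "nat u + 1"]) auto
  qed
qed

lemma mod_mult_less_mult_iff:
  fixes a :: int and d m q j :: nat
  assumes "d > 0"
  shows "(a - int j * int d) mod (int m * int d) < int q * int d \<longleftrightarrow>
         (a div int d - int j) mod int m < int q"
proof -
  define w where "w = (a div int d - int j) mod int m"
  define r where "r = a mod int d"
  have shift: "a - int j * int d = a + (- int j) * int d" by simp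
  have "(a - int j * int d) mod (int d * int m)
      = int d * ((a - int j * int d) div int d mod int m) + (a - int j * int d) mod int d"
    by (rule mod_mult2_eq')
  also have "(a - int j * int d) div int d = a div int d - int j"
    unfolding shift using assms by (subst div_mult_self1) auto
  also have "(a - int j * int d) mod int d = r"
    unfolding shift r_def by (rule mod_mult_self1)
  finally have eq: "(a - int j * int d) mod (int m * int d) = int d * w + r"
    by (simp add: w_def mult.commute)
  have r: "0 \<le> r" "r < int d" using assms by (auto simp: r_def)
  have "int d * w + r < int q * int d \<longleftrightarrow> w < int q"
  proof
    assume "int d * w + r < int q * int d"
    then have "w * int d < int q * int d" using r mult.commute[of "int d" w] by linarith
    then show "w < int q" using assms by simp
  next
    assume "w < int q"
    then have "(w + 1) * int d \<le> int q * int d" using assms by (intro mult_right_mono) auto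
    then show "int d * w + r < int q * int d" using r by (simp add: algebra_simps)
  qed
  then show ?thesis unfolding eq w_def .
qed

lemma card_mod_window:
  fixes a :: int and m q :: nat
  assumes "q \<le> m"
  shows "card {j \<in> {..<m}. (a - int j) mod int m < int q} = q"
proof -
  let ?W = "{j \<in> {..<m}. (a - int j) mod int m < int q}"
  let ?f = "\<lambda>j::nat. nat ((a - int j) mod int m)"
  have "bij_betw ?f ?W {..<q}"
  proof (rule bij_betw_imageI)
    show "inj_on ?f ?W"
    proof (rule inj_onI)
      fix x y assume x: "x \<in> ?W" and y: "y \<in> ?W" and "?f x = ?f y"
      moreover have "m > 0" using x by auto
      ultimately have "(a - int x) mod int m = (a - int y) mod int m"
        by (simp add: eq_nat_nat_iff)
      then have "int m dvd int y - int x"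
        by (simp add: mod_eq_dvd_iff)
      then have "int x mod int m = int y mod int m"
        by (simp add: mod_eq_dvd_iff dvd_diff_commute)
      then show "x = y" using x y by (simp add: zmod_int)
    qed
    show "?f ` ?W = {..<q}"
    proof (intro equalityI subsetI)
      fix w assume "w \<in> ?f ` ?W"
      then show "w \<in> {..<q}" by (auto simp: nat_less_iff)
    next
      fix w assume w: "w \<in> {..<q}"
      then have "m > 0" using assms by auto
      define j where "j = nat ((a - int w) mod int m)"
      have j: "int j = (a - int w) mod int m" "j < m"
        using \<open>m > 0\<close> by (simp_all add: j_def nat_less_iff)
      have "(a - int j) mod int m = (a - (a - int w)) mod int m"
        unfolding j(1) by (metis mod_diff_right_eq)
      also have "\<dots> = int w" using w assms by simp
      finally show "w \<in> ?f ` ?W" using j w by (intro image_eqI[of _ _ j]) auto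
    qed
  qed
  then show ?thesis by (simp add: bij_betw_same_card)
qed

text \<open>A window of \<open>q < m\<close> consecutive residues mod \<open>m\<close> determines its starting point:
  it is the unique residue of the window whose predecessor is outside it.\<close>

lemma mod_window_eq_imp_eq:
  fixes j1 j2 m q :: nat
  assumes "0 < q" "q < m" "j1 < m" "j2 < m"
    and windows: "\<And>w::int. (w - int j1) mod int m < int q \<longleftrightarrow> (w - int j2) mod int m < int q"
  shows "j1 = j2"
proof -
  define c where "c = (int j1 - int j2) mod int m"
  have c: "0 \<le> c" "c < int m" using assms by (simp_all add: c_def)
  have "c < int q" using windows[of "int j1"] assms by (simp add: c_def)
  have "(int j1 - 1 - int j1) mod int m = int m - 1"
    using assms by (simp add: zmod_minus1)
  then have "\<not> (int j1 - 1 - int j2) mod int m < int q"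
    using windows[of "int j1 - 1"] assms by simp
  moreover have "(int j1 - 1 - int j2) mod int m = (c - 1) mod int m"
    by (simp add: c_def mod_diff_left_eq algebra_simps)
  ultimately have "c = 0"
    using c \<open>c < int q\<close> by (cases "c = 0") auto
  then have "int j1 mod int m = int j2 mod int m"
    by (simp add: c_def mod_eq_dvd_iff flip: mod_eq_0_iff_dvd)
  then show ?thesis using assms by (simp add: zmod_int)
qed

locale s_cycle =
  fixes k s m q :: nat
  assumes block_pos: "0 < k - s" and k_eq: "k = q * (k - s)"
    and q_pos: "0 < q" and q_less_m: "q < m"
begin

abbreviation d :: nat where "d \<equiv> k - s"

abbreviation n :: nat where "n \<equiv> cyc_n k s m"

lemma n_eq: "n = m * d"
  by (simp add: cyc_n_def)

lemma k_less_n: "k < n"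
proof -
  have "q * d < m * d" using q_less_m block_pos by simp
  then show ?thesis using k_eq n_eq by simp
qed

lemma k_pos: "0 < k"
  using k_eq q_pos block_pos by simp

lemma inj_on_edge_offsets: "inj_on (\<lambda>t. (j * d + t) mod n) {1..k}"
proof (rule inj_onI)
  fix x y assume x: "x \<in> {1..k}" and y: "y \<in> {1..k}"
    and "(j * d + x) mod n = (j * d + y) mod n"
  then have "int (j * d + x) mod int n = int (j * d + y) mod int n"
    by (simp only: of_nat_mod[symmetric])
  then have "int n dvd int (j * d + x) - int (j * d + y)"
    by (simp only: mod_eq_dvd_iff)
  then have "int n dvd int x - int y" by simp
  moreover have "\<bar>int x - int y\<bar> < int n" using x y k_less_n by auto
  ultimately show "x = y"
    using dvd_imp_le_int[of "int x - int y" "int n"] by (cases "x = y") auto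
qed

lemma card_cyc_edge: "card (cyc_edge k s m j) = k"
  using card_image[OF inj_on_edge_offsets] by (simp add: cyc_edge_def)

lemma cyc_edge_subset: "cyc_edge k s m j \<subseteq> {..<n}"
  using k_less_n by (auto simp: cyc_edge_def)

lemma cyc_edges_uniform: "e \<in> cyc_edges k s m \<Longrightarrow> card e = k \<and> e \<subseteq> {..<n}"
  using card_cyc_edge cyc_edge_subset by (auto simp: cyc_edges_def)

text \<open>Vertex \<open>v\<close> lies in the block \<open>(v - 1) div d\<close>, and \<open>e_j\<close> is the union of the
  \<open>q\<close> consecutive blocks \<open>j, \<dots>, j + q - 1\<close> (mod \<open>m\<close>).\<close>

lemma mem_cyc_edge_iff_block:
  assumes "v < n"
  shows "v \<in> cyc_edge k s m j \<longleftrightarrow> ((int v - 1) div int d - int j) mod int m < int q"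
proof -
  have "int n = int m * int d" "int k = int q * int d"
    using n_eq k_eq by (metis of_nat_mult)+
  then show ?thesis
    using cyc_edge_mem_iff[OF k_less_n assms, of j]
      mod_mult_less_mult_iff[OF block_pos, of "int v - 1" j m q] by simp
qed

lemma block_start_mem_cyc_edge_iff:
  assumes "b < m"
  shows "b * d \<in> cyc_edge k s m j \<longleftrightarrow> (int b - 1 - int j) mod int m < int q"
proof -
  have "(-1 + int b * int d) div int d = int b + (-1) div int d"
    using block_pos by (intro div_mult_self1) simp
  moreover have "(-1::int) div int d = -1"
    using block_pos by (intro div_eq_minus1) simp
  ultimately have "(int (b * d) - 1) div int d = int b - 1" by simp
  moreover have "b * d < n" using assms block_pos n_eq by simp
  ultimately show ?thesis using mem_cyc_edge_iff_block[of "b * d" j] by simp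
qed

lemma inj_on_cyc_edge: "inj_on (cyc_edge k s m) {..<m}"
proof (rule inj_onI)
  fix j1 j2 assume j: "j1 \<in> {..<m}" "j2 \<in> {..<m}"
    and edges_eq: "cyc_edge k s m j1 = cyc_edge k s m j2"
  show "j1 = j2"
  proof (rule mod_window_eq_imp_eq[OF q_pos q_less_m])
    show "j1 < m" "j2 < m" using j by simp_all
  next
    fix w :: int
    define b where "b = nat ((w + 1) mod int m)"
    have "b < m" using q_less_m by (simp add: b_def nat_less_iff)
    have window: "(int b - 1 - int j) mod int m = (w - int j) mod int m" for j
    proof -
      have "int b mod int m = (w + 1) mod int m" using q_less_m by (simp add: b_def)
      then have "(int b - (1 + int j)) mod int m = (w + 1 - (1 + int j)) mod int m"
        by (metis mod_diff_left_eq)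
      then show ?thesis by (simp add: algebra_simps)
    qed
    have "(w - int j) mod int m < int q \<longleftrightarrow> b * d \<in> cyc_edge k s m j" for j
      using block_start_mem_cyc_edge_iff[OF \<open>b < m\<close>, of j] by (simp only: window)
    then show "(w - int j1) mod int m < int q \<longleftrightarrow> (w - int j2) mod int m < int q"
      by (simp only: edges_eq)
  qed
qed

lemma cyc_deg_eq:
  assumes "i < n"
  shows "cyc_deg k s m i = q"
proof -
  have "{e \<in> cyc_edges k s m. i \<in> e} = cyc_edge k s m ` {j \<in> {..<m}. i \<in> cyc_edge k s m j}"
    by (auto simp: cyc_edges_def)
  moreover have "inj_on (cyc_edge k s m) {j \<in> {..<m}. i \<in> cyc_edge k s m j}"
    using inj_on_cyc_edge by (rule inj_on_subset) auto
  moreover have "{j \<in> {..<m}. i \<in> cyc_edge k s m j}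
      = {j \<in> {..<m}. ((int i - 1) div int d - int j) mod int m < int q}"
    using mem_cyc_edge_iff_block[OF assms] by auto
  ultimately show ?thesis
    using card_mod_window[of q m "(int i - 1) div int d"] q_less_m
    by (simp add: cyc_deg_def card_image)
qed

lemma cyc_regular: "cyc_regular k s m"
  by (simp add: cyc_regular_def cyc_deg_eq)

lemma tensor_apply_cyc_diag:
  fixes x :: "nat \<Rightarrow> real"
  assumes "i < n"
  shows "tensor_apply k n (cyc_diag k s m) x i = q * x i ^ (k - 1)"
proof -
  have "cyc_diag k s m = (\<lambda>is. if \<exists>j. is = replicate k j then real (cyc_deg k s m (hd is)) else 0)"
    by (simp add: fun_eq_iff cyc_diag_def)
  then show ?thesis
    using tensor_apply_diagonal[where D = "\<lambda>i. real (cyc_deg k s m i)" and x = x] k_pos assms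
    by (simp add: cyc_deg_eq)
qed

lemma tensor_apply_cyc_adj:
  fixes x :: "nat \<Rightarrow> real"
  assumes "i < n"
  shows "tensor_apply k n (cyc_adj k s m) x i
       = (\<Sum>e | e \<in> cyc_edges k s m \<and> i \<in> e. prod x (e - {i}))"
proof -
  have "cyc_adj k s m = (\<lambda>is. if set is \<in> cyc_edges k s m then 1 / fact (k - 1) else 0)"
    by (simp add: fun_eq_iff cyc_adj_def)
  moreover have "finite (cyc_edges k s m)" by (simp add: cyc_edges_def)
  ultimately show ?thesis
    using tensor_apply_adjacency[where E = "cyc_edges k s m", OF cyc_edges_uniform] k_pos assms
    by simp
qed

lemma tensor_apply_cyc_slap:
  fixes x :: "nat \<Rightarrow> real"
  assumes "i < n"
  shows "tensor_apply k n (cyc_slap k s m) x i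
       = q * x i ^ (k - 1) + (\<Sum>e | e \<in> cyc_edges k s m \<and> i \<in> e. prod x (e - {i}))"
  using tensor_apply_add[of k n "cyc_diag k s m" "cyc_adj k s m" x i]
    tensor_apply_cyc_diag[OF assms, of x] tensor_apply_cyc_adj[OF assms, of x]
  by (simp add: cyc_slap_def[abs_def])

lemma tensor_apply_cyc_lap:
  fixes x :: "nat \<Rightarrow> real"
  assumes "i < n"
  shows "tensor_apply k n (cyc_lap k s m) x i
       = q * x i ^ (k - 1) - (\<Sum>e | e \<in> cyc_edges k s m \<and> i \<in> e. prod x (e - {i}))"
  using tensor_apply_diff[of k n "cyc_diag k s m" "cyc_adj k s m" x i]
    tensor_apply_cyc_diag[OF assms, of x] tensor_apply_cyc_adj[OF assms, of x]
  by (simp add: cyc_lap_def[abs_def])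

lemma abs_sum_cyc_edge_prods_le:
  fixes x :: "nat \<Rightarrow> real" and M :: real
  assumes "\<And>j. j < n \<Longrightarrow> \<bar>x j\<bar> \<le> M" and "i < n"
  shows "\<bar>\<Sum>e | e \<in> cyc_edges k s m \<and> i \<in> e. prod x (e - {i})\<bar> \<le> q * M ^ (k - 1)"
  using abs_sum_edge_prods_le[where E = "cyc_edges k s m", OF cyc_edges_uniform assms(1), where i = i]
    cyc_deg_eq[OF assms(2)]
  by (simp add: cyc_deg_def)

text \<open>Both \<open>Q\<close> and \<open>L\<close> differ from \<open>q x_i^(k-1)\<close> by the edge sum up to sign.\<close>

lemma H_eigenvalue_le_twice_deg:
  fixes \<mu> :: real
  assumes edge_part: "\<And>(x :: nat \<Rightarrow> real) i. i < n \<Longrightarrow>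
      \<bar>tensor_apply k n T x i - q * x i ^ (k - 1)\<bar>
        = \<bar>\<Sum>e | e \<in> cyc_edges k s m \<and> i \<in> e. prod x (e - {i})\<bar>"
    and "is_H_eigenvalue k n T \<mu>"
  shows "\<mu> \<le> 2 * real q"
  using assms(2)
proof (rule H_eigenvalue_le_twice[rotated])
  fix x :: "nat \<Rightarrow> real" and M i
  assume "\<And>j. j < n \<Longrightarrow> \<bar>x j\<bar> \<le> M" and "i < n"
  then show "\<bar>tensor_apply k n T x i - q * x i ^ (k - 1)\<bar> \<le> q * M ^ (k - 1)"
    using edge_part abs_sum_cyc_edge_prods_le by simp
qed

lemma largest_H_eigenvalue_cyc_slap: "is_largest_H_eigenvalue k n (cyc_slap k s m) (2 * real q)"
  unfolding is_largest_H_eigenvalue_def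
proof
  have "tensor_apply k n (cyc_slap k s m) (\<lambda>_. 1) i = 2 * real q * 1 ^ (k - 1)" if "i < n" for i
    using tensor_apply_cyc_slap[OF that] cyc_deg_eq[OF that] by (simp add: cyc_deg_def)
  then show "is_H_eigenvalue k n (cyc_slap k s m) (2 * real q)"
    unfolding is_H_eigenvalue_def using k_less_n by (intro exI[of _ "\<lambda>_. 1"]) auto
  show "\<forall>\<mu>. is_H_eigenvalue k n (cyc_slap k s m) \<mu> \<longrightarrow> \<mu> \<le> 2 * real q"
    using H_eigenvalue_le_twice_deg[of "cyc_slap k s m"] tensor_apply_cyc_slap by simp
qed

end

lemma prod_lessThan_add: "(\<Prod>u<a + b. f u) = (\<Prod>u<a. f u) * (\<Prod>u<b. f (a + u))"
  for f :: "nat \<Rightarrow> 'a::comm_monoid_mult"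
  by (induction b) (simp_all add: ac_simps)

definition block_sign :: "nat \<Rightarrow> nat \<Rightarrow> real" where
  "block_sign L w = (if L dvd w then -1 else 1)"

lemma prod_block_sign_window:
  assumes "0 < L"
  shows "(\<Prod>u<L. block_sign L (c + u)) = -1"
proof (induction c)
  case 0
  obtain L' where L': "L = Suc L'" using assms by (cases L) auto
  have "(\<Prod>u<L'. block_sign L (Suc u)) = 1"
    by (rule prod.neutral) (auto simp: block_sign_def L' dest: dvd_imp_le)
  moreover have "(\<Prod>u<L. block_sign L (0 + u)) = block_sign L 0 * (\<Prod>u<L'. block_sign L (Suc u))"
    unfolding L' by (subst prod.lessThan_Suc_shift) simp
  ultimately show ?case by (simp add: block_sign_def)
next
  case (Suc c)
  obtain L' where L': "L = Suc L'" using assms by (cases L) auto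
  have "(\<Prod>u<L. block_sign L (c + u)) = block_sign L c * (\<Prod>u<L'. block_sign L (Suc c + u))"
    unfolding L' by (subst prod.lessThan_Suc_shift) simp
  moreover have "(\<Prod>u<L. block_sign L (Suc c + u))
      = (\<Prod>u<L'. block_sign L (Suc c + u)) * block_sign L (Suc c + L')"
    unfolding L' by (rule prod.lessThan_Suc)
  moreover have "Suc c + L' = c + L" using L' by simp
  then have "block_sign L (Suc c + L') = block_sign L c"
    by (simp only:) (simp add: block_sign_def)
  ultimately show ?case using Suc by (simp add: ac_simps)
qed

lemma prod_block_sign_windows:
  assumes "0 < L"
  shows "(\<Prod>u<L * r. block_sign L (c + u)) = (-1) ^ r"
proof (induction r)
  case (Suc r)
  have "(\<Prod>u<L * Suc r. block_sign L (c + u))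
      = (\<Prod>u<L * r. block_sign L (c + u)) * (\<Prod>u<L. block_sign L (c + L * r + u))"
    using prod_lessThan_add[of "\<lambda>u. block_sign L (c + u)" "L * r" L] by (simp add: ac_simps)
  then show ?case
    using Suc prod_block_sign_window[OF assms, of "c + L * r"] by simp
qed simp

context s_cycle
begin

text \<open>The eigenvector of \<open>L\<close> below is \<open>-1\<close> exactly at the vertices \<open>v \<equiv> 1 (mod p d)\<close>
  (the shift by \<open>n - 1\<close> avoids truncated subtraction at \<open>v = 0\<close>); an edge consists of
  \<open>k = r p d\<close> consecutive vertices and so contains \<open>r\<close> of them.\<close>

lemma prod_block_sign_cyc_edge:
  assumes "q = p * r" and "0 < p" and "p dvd m"
  shows "(\<Prod>v\<in>cyc_edge k s m j. block_sign (p * d) (v + n - 1)) = (-1) ^ r"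
proof -
  let ?L = "p * d"
  have "?L dvd n" using assms(3) n_eq by (simp add: mult_dvd_mono)
  have shift: "block_sign ?L ((j * d + t) mod n + n - 1) = block_sign ?L (j * d + t - 1)"
    if "t \<in> {1..k}" for t
  proof -
    have "((j * d + t) mod n + n - 1) mod n = ((j * d + t) mod n + (n - 1)) mod n"
      using k_less_n by simp
    also have "\<dots> = (j * d + t + (n - 1)) mod n"
      by (rule mod_add_left_eq)
    also have "j * d + t + (n - 1) = j * d + t - 1 + n"
      using that k_less_n by simp
    finally have "?L dvd ((j * d + t) mod n + n - 1) \<longleftrightarrow> ?L dvd (j * d + t - 1 + n)"
      using dvd_mod_iff[OF \<open>?L dvd n\<close>] by metis
    also have "\<dots> \<longleftrightarrow> ?L dvd (j * d + t - 1)"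
      using \<open>?L dvd n\<close> by (rule dvd_add_left_iff)
    finally show ?thesis by (simp add: block_sign_def)
  qed
  have "(\<Prod>v\<in>cyc_edge k s m j. block_sign ?L (v + n - 1))
      = (\<Prod>t\<in>{1..k}. block_sign ?L (j * d + t - 1))"
    unfolding cyc_edge_def prod.reindex[OF inj_on_edge_offsets] comp_def
    by (rule prod.cong[OF refl]) (rule shift)
  also have "\<dots> = (\<Prod>u<?L * r. block_sign ?L (j * d + u))"
    using prod.atLeast1_atMost_eq[of "\<lambda>t. block_sign ?L (j * d + t - 1)" k] k_eq assms(1)
    by (simp add: ac_simps)
  also have "\<dots> = (-1) ^ r"
    using assms(2) block_pos by (intro prod_block_sign_windows) simp
  finally show ?thesis .
qed

lemma largest_H_eigenvalue_cyc_lap: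
  assumes "q = p * r" and "0 < p" and "p dvd m" and "odd r" and "even k"
  shows "is_largest_H_eigenvalue k n (cyc_lap k s m) (2 * real q)"
  unfolding is_largest_H_eigenvalue_def
proof
  define x where "x v = block_sign (p * d) (v + n - 1)" for v
  have x_sign: "x v = 1 \<or> x v = -1" for v by (simp add: x_def block_sign_def)
  have x_pow: "x v ^ (k - 1) = x v" for v
    using x_sign[of v] assms(5) k_pos by (auto simp: odd_pos)
  have "tensor_apply k n (cyc_lap k s m) x i = 2 * real q * x i ^ (k - 1)" if i: "i < n" for i
  proof -
    have "prod x (e - {i}) = - x i" if e: "e \<in> cyc_edges k s m" "i \<in> e" for e
    proof -
      have "prod x e = -1"
        using e(1) prod_block_sign_cyc_edge[OF assms(1-3)] assms(4)
        by (auto simp: cyc_edges_def x_def)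
      moreover have "prod x e = x i * prod x (e - {i})"
        using e cyc_edges_uniform[OF e(1)] finite_subset by (intro prod.remove) auto
      ultimately show ?thesis using x_sign[of i] by auto
    qed
    then have "(\<Sum>e | e \<in> cyc_edges k s m \<and> i \<in> e. prod x (e - {i})) = - q * x i"
      using cyc_deg_eq[OF i] by (simp add: cyc_deg_def)
    then show ?thesis using tensor_apply_cyc_lap[OF i, of x] x_pow by simp
  qed
  then show "is_H_eigenvalue k n (cyc_lap k s m) (2 * real q)"
    unfolding is_H_eigenvalue_def using k_less_n x_sign[of 0] zero_neq_neg_one
    by (intro exI[of _ x] conjI exI[of _ 0]) auto
  show "\<forall>\<mu>. is_H_eigenvalue k n (cyc_lap k s m) \<mu> \<longrightarrow> \<mu> \<le> 2 * real q"
    using H_eigenvalue_le_twice_deg[of "cyc_lap k s m"] tensor_apply_cyc_lap by simp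
qed

end

theorem proposition5p1:
  fixes k s m q :: nat
  assumes "1 \<le> s" and "s \<le> k - 1"
    and "q > 0" and "k = q * (k - s)" and "k \<ge> 3"
    and "cyc_n k s m \<ge> 2 * k - s"
  shows "cyc_regular k s m
     \<and> is_largest_H_eigenvalue k (cyc_n k s m) (cyc_slap k s m) (2 * real q)
     \<and> ((even k \<and> (odd q \<or> (\<exists>t0 l0 :: nat. t0 > 0 \<and> q = 2 ^ t0 * (2 * l0 + 1) \<and> 2 ^ t0 dvd m)))
          \<longrightarrow> is_largest_H_eigenvalue k (cyc_n k s m) (cyc_lap k s m) (2 * real q))"
proof -
  have "q * (k - s) + (k - s) \<le> m * (k - s)" and "0 < k - s"
    using assms(2,4,5,6) by (simp_all add: cyc_n_def)
  then have "q * (k - s) < m * (k - s)" by linarith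
  then have "q < m" by (metis mult_less_cancel2)
  interpret s_cycle k s m q
    using \<open>0 < k - s\<close> assms(3,4) \<open>q < m\<close> by unfold_locales
  have "is_largest_H_eigenvalue k n (cyc_lap k s m) (2 * real q)"
    if "even k" and "odd q \<or> (\<exists>t0 l0 :: nat. t0 > 0 \<and> q = 2 ^ t0 * (2 * l0 + 1) \<and> 2 ^ t0 dvd m)"
    using that(2)
  proof
    assume "odd q"
    then show ?thesis
      using largest_H_eigenvalue_cyc_lap[of 1 q] \<open>even k\<close> by simp
  next
    assume "\<exists>t0 l0 :: nat. t0 > 0 \<and> q = 2 ^ t0 * (2 * l0 + 1) \<and> 2 ^ t0 dvd m"
    then obtain t0 l0 :: nat where "q = 2 ^ t0 * (2 * l0 + 1)" and "2 ^ t0 dvd m" by blast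
    then show ?thesis
      using largest_H_eigenvalue_cyc_lap[of "2 ^ t0" "2 * l0 + 1"] \<open>even k\<close> by simp
  qed
  then show ?thesis
    using cyc_regular largest_H_eigenvalue_cyc_slap by blast
qed

end
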